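(* Let $v\ge 2$ and let $(X,\mathcal{A})$ be a $(v,2,1)$-BIBD, i.e. $|X|=v$ and $\mathcal{A}$ is the set of all $2$-subsets of $X$. If $\phi:\mathcal{A}\to Y$ is a weak nesting of $(X,\mathcal{A})$ into a partial $(w,3,2)$-BIBD, where $X\subseteq Y$ and $|Y|=w$, then $w\ge (5v-1)/4$.
   Context: A $(v,k,\lambda)$-BIBD is a pair $(X,\mathcal{A})$ where $X$ is a set of $v$ points and $\mathcal{A}$ is a multiset of $k$-subsets of $X$ (blocks) such that every pair of distinct points lies in exactly $\lambda$ blocks. A partial $(w,k,\lambda)$-BIBD is defined in the same way on $w$ points, except that every pair of distinct points lies in at most $\lambda$ blocks. Given a $(v,k,\lambda)$-BIBD $(X,\mathcal{A})$ and a set $Y\supseteq X$ with $|Y|=w$, a map $\phi:\mathcal{A}\to Y$ is a weak nesting if $\phi(A)\notin A$ for every block $A$ and the multiset of augmented blocks $\{A\cup\{\phi(A)\}:A\in\mathcal{A}\}$ (one for each block of $\mathcal{A}$, with multiplicity) is a partial $(w,k+1,\lambda+1)$-BIBD on point set $Y$. *)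

theory Defs
  imports Complex_Main "HOL-Library.Multiset"
begin

definition bibd :: "'a set \<Rightarrow> nat \<Rightarrow> nat \<Rightarrow> nat \<Rightarrow> 'a set multiset \<Rightarrow> bool" where
  "bibd X v k lam \<A> \<longleftrightarrow>
     finite X \<and> card X = v \<and>
     (\<forall>B\<in>#\<A>. B \<subseteq> X \<and> card B = k) \<and>
     (\<forall>x\<in>X. \<forall>y\<in>X. x \<noteq> y \<longrightarrow> size (filter_mset (\<lambda>B. x \<in> B \<and> y \<in> B) \<A>) = lam)"

definition partial_bibd :: "'a set \<Rightarrow> nat \<Rightarrow> nat \<Rightarrow> nat \<Rightarrow> 'a set multiset \<Rightarrow> bool" where
  "partial_bibd Y w k lam \<A> \<longleftrightarrow>
     finite Y \<and> card Y = w \<and>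
     (\<forall>B\<in>#\<A>. B \<subseteq> Y \<and> card B = k) \<and>
     (\<forall>x\<in>Y. \<forall>y\<in>Y. x \<noteq> y \<longrightarrow> size (filter_mset (\<lambda>B. x \<in> B \<and> y \<in> B) \<A>) \<le> lam)"

definition weak_nesting ::
  "'a set \<Rightarrow> nat \<Rightarrow> nat \<Rightarrow> nat \<Rightarrow> 'a set multiset \<Rightarrow> 'a set \<Rightarrow> nat \<Rightarrow> ('a set \<Rightarrow> 'a) \<Rightarrow> bool" where
  "weak_nesting X v k lam \<A> Y w \<phi> \<longleftrightarrow>
     bibd X v k lam \<A> \<and> X \<subseteq> Y \<and>
     (\<forall>B\<in>#\<A>. \<phi> B \<in> Y \<and> \<phi> B \<notin> B) \<and>
     partial_bibd Y w (k + 1) (lam + 1) (image_mset (\<lambda>B. insert (\<phi> B) B) \<A>)"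

end

theory Submission
  imports Defs
begin

(* Call a pair B of X an inside pair if its nesting point \<phi> B lies in X. The augmented block of
   an inside pair is a triangle covering three pairs of X, whereas every pair lies in at most two
   augmented blocks; double counting therefore shows that at most half of the v(v-1)/2 pairs are
   inside pairs. The others are nested at the w - v points outside X, and each outside point z
   receives at most v pairs, because every a in X lies in at most two augmented blocks through z
   and each pair nested at z accounts for two such incidences. Hence v(v-1)/4 \<le> (w - v) v. *)

definition two_subsets :: "'a set \<Rightarrow> 'a set set" where
  "two_subsets X = {e. e \<subseteq> X \<and> card e = 2}"

lemma finite_two_subsets: "finite X \<Longrightarrow> finite (two_subsets X)"
  unfolding two_subsets_def by simp

lemma mem_two_subsets_iff:
  "e \<in> two_subsets X \<longleftrightarrow> (\<exists>x\<in>X. \<exists>y\<in>X. x \<noteq> y \<and> e = {x, y})"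
  unfolding two_subsets_def by (auto simp: card_2_iff)

lemma two_subsets_within:
  "S \<subseteq> X \<Longrightarrow> {e \<in> two_subsets X. e \<subseteq> S} = two_subsets S"
  unfolding two_subsets_def by auto

lemma card_two_subsets:
  assumes "finite X"
  shows "2 * card (two_subsets X) = card X * (card X - 1)"
proof -
  have "card (two_subsets X) = card X choose 2"
    using n_subsets[OF assms] unfolding two_subsets_def .
  moreover have "even (card X * (card X - 1))"
    by (cases "card X") auto
  ultimately show ?thesis
    by (simp add: choose_two)
qed

lemma card_two_subsets_of_triangle:
  assumes "finite X" and "B \<in> two_subsets X" and "c \<in> X" and "c \<notin> B"
  shows "card {e \<in> two_subsets X. e \<subseteq> insert c B} = 3"
proof -
  have "B \<subseteq> X" "card B = 2"
    using assms(2) unfolding two_subsets_def by auto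
  then have "finite B"
    using assms(1) finite_subset by blast
  then have "2 * card (two_subsets (insert c B)) = 2 * 3"
    using card_two_subsets[of "insert c B"] \<open>card B = 2\<close> assms(4) by simp
  then show ?thesis
    using two_subsets_within[of "insert c B" X] \<open>B \<subseteq> X\<close> assms(3) by simp
qed

lemma card_set_mset_le_size: "card (set_mset M) \<le> size M"
  by (metis mset_set_set_mset_msubset size_mset_mono size_mset_set)

lemma card_Collect_set_mset_le_size_filter_mset:
  "card {x \<in> set_mset M. P x} \<le> size (filter_mset P M)"
  using card_set_mset_le_size[of "filter_mset P M"] by simp

lemma weak_nesting_card_covering_le:
  assumes "weak_nesting X v k lam \<A> Y w \<phi>" and "x \<in> Y" "y \<in> Y" "x \<noteq> y"
  shows "card {B \<in> set_mset \<A>. {x, y} \<subseteq> insert (\<phi> B) B} \<le> lam + 1"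
proof -
  have "partial_bibd Y w (k + 1) (lam + 1) (image_mset (\<lambda>B. insert (\<phi> B) B) \<A>)"
    using assms(1) unfolding weak_nesting_def by blast
  then have "size (filter_mset (\<lambda>C. x \<in> C \<and> y \<in> C) (image_mset (\<lambda>B. insert (\<phi> B) B) \<A>))
      \<le> lam + 1"
    using assms(2-4) unfolding partial_bibd_def by blast
  then show ?thesis
    using card_Collect_set_mset_le_size_filter_mset[of \<A> "\<lambda>B. {x, y} \<subseteq> insert (\<phi> B) B"]
    by (simp add: filter_mset_image_mset)
qed

lemma uniform_family_card_le:
  assumes "finite X"
    and uniform: "\<And>B. B \<in> \<N> \<Longrightarrow> B \<subseteq> X \<and> card B = k"
    and degree: "\<And>a. a \<in> X \<Longrightarrow> card {B \<in> \<N>. a \<in> B} \<le> d"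
  shows "k * card \<N> \<le> d * card X"
proof -
  have "finite \<N>"
    using assms(1) uniform by (meson Pow_iff finite_Pow_iff finite_subset subsetI)
  have "k * card \<N> = (\<Sum>B\<in>\<N>. card {a \<in> X. a \<in> B})"
    using uniform by (simp add: Int_absorb1 Collect_conj_eq flip: Int_def)
  also have "\<dots> = (\<Sum>a\<in>X. card {B \<in> \<N>. a \<in> B})"
    by (rule sum_multicount_gen) (use \<open>finite \<N>\<close> assms(1) in auto)
  also have "\<dots> \<le> d * card X"
    using sum_bounded_above[of X _ d] degree by (simp add: mult.commute)
  finally show ?thesis .
qed

lemma card_le_mult_if_fibres_le:
  assumes "finite Z" and "f ` A \<subseteq> Z"
    and "\<And>z. z \<in> Z \<Longrightarrow> card {x \<in> A. f x = z} \<le> c"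
  shows "card A \<le> card Z * c"
proof -
  have "A = (\<Union>z\<in>Z. {x \<in> A. f x = z})"
    using assms(2) by auto
  then have "card A \<le> (\<Sum>z\<in>Z. card {x \<in> A. f x = z})"
    using card_UN_le[OF assms(1)] by metis
  also have "\<dots> \<le> card Z * c"
    using sum_bounded_above[of Z _ c] assms(3) by simp
  finally show ?thesis .
qed

lemma card_fibre_outside_le:
  assumes "finite X" and "z \<notin> X"
    and cover: "\<And>a. a \<in> X \<Longrightarrow> card {B \<in> two_subsets X. {a, z} \<subseteq> insert (\<phi> B) B} \<le> 2"
  shows "card {B \<in> two_subsets X. \<phi> B = z} \<le> card X"
proof -
  have "2 * card {B \<in> two_subsets X. \<phi> B = z} \<le> 2 * card X"
  proof (rule uniform_family_card_le[OF assms(1)])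
    show "B \<subseteq> X \<and> card B = 2" if "B \<in> {B \<in> two_subsets X. \<phi> B = z}" for B
      using that unfolding two_subsets_def by simp
    show "card {B \<in> {B \<in> two_subsets X. \<phi> B = z}. a \<in> B} \<le> 2" if "a \<in> X" for a
    proof -
      have "{B \<in> {B \<in> two_subsets X. \<phi> B = z}. a \<in> B}
          \<subseteq> {B \<in> two_subsets X. {a, z} \<subseteq> insert (\<phi> B) B}"
        by auto
      then have "card {B \<in> {B \<in> two_subsets X. \<phi> B = z}. a \<in> B}
          \<le> card {B \<in> two_subsets X. {a, z} \<subseteq> insert (\<phi> B) B}"
        by (intro card_mono) (simp add: finite_two_subsets assms(1))
      then show ?thesis
        using cover[OF that] by linarith
    qed
  qed
  then show ?thesis by simp
qed

lemma card_nested_outside_le: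
  assumes "finite Y" and "X \<subseteq> Y"
    and nested: "\<And>B. B \<in> two_subsets X \<Longrightarrow> \<phi> B \<in> Y"
    and cover: "\<And>a z. a \<in> X \<Longrightarrow> z \<in> Y - X \<Longrightarrow>
      card {B \<in> two_subsets X. {a, z} \<subseteq> insert (\<phi> B) B} \<le> 2"
  shows "card {B \<in> two_subsets X. \<phi> B \<notin> X} \<le> card (Y - X) * card X"
proof (rule card_le_mult_if_fibres_le)
  fix z
  assume z: "z \<in> Y - X"
  have "{B \<in> {B \<in> two_subsets X. \<phi> B \<notin> X}. \<phi> B = z} = {B \<in> two_subsets X. \<phi> B = z}"
    using z by blast
  moreover have "card {B \<in> two_subsets X. \<phi> B = z} \<le> card X"
    using card_fibre_outside_le[of X z] finite_subset[OF assms(2,1)] cover z by blast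
  ultimately show "card {B \<in> {B \<in> two_subsets X. \<phi> B \<notin> X}. \<phi> B = z} \<le> card X"
    by simp
qed (use assms(1) nested in auto)

lemma card_two_subsets_le_twice_outside:
  assumes "finite X"
    and notin: "\<And>B. B \<in> two_subsets X \<Longrightarrow> \<phi> B \<notin> B"
    and cover: "\<And>x y. x \<in> X \<Longrightarrow> y \<in> X \<Longrightarrow> x \<noteq> y \<Longrightarrow>
      card {B \<in> two_subsets X. {x, y} \<subseteq> insert (\<phi> B) B} \<le> 2"
  shows "card (two_subsets X) \<le> 2 * card {B \<in> two_subsets X. \<phi> B \<notin> X}"
proof -
  define P where "P = two_subsets X"
  define M where "M = {B \<in> P. \<phi> B \<in> X}"
  define N where "N = {B \<in> P. \<phi> B \<notin> X}"
  let ?covered = "\<lambda>B. {e \<in> P. e \<subseteq> insert (\<phi> B) B}"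
  have "finite P"
    unfolding P_def using assms(1) by (rule finite_two_subsets)
  have split: "P = M \<union> N" "M \<inter> N = {}" "finite M" "finite N"
    unfolding M_def N_def using \<open>finite P\<close> by auto
  have "card (?covered B) = 3" if "B \<in> M" for B
    using card_two_subsets_of_triangle[OF assms(1)] that notin unfolding M_def P_def by blast
  then have "3 * card M = (\<Sum>B\<in>M. card (?covered B))"
    by simp
  moreover have "card N \<le> (\<Sum>B\<in>N. card (?covered B))"
  proof -
    have "1 \<le> card (?covered B)" if "B \<in> N" for B
      using that \<open>finite P\<close> unfolding N_def by (auto simp: Suc_le_eq card_gt_0_iff)
    then show ?thesis
      using sum_bounded_below[of N 1 "\<lambda>B. card (?covered B)"] by simp
  qed
  ultimately have "3 * card M + card N \<le> (\<Sum>B\<in>P. card (?covered B))"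
    using split by (simp add: sum.union_disjoint)
  also have "\<dots> = (\<Sum>e\<in>P. card {B \<in> P. e \<subseteq> insert (\<phi> B) B})"
    by (rule sum_multicount_gen) (use \<open>finite P\<close> in auto)
  also have "\<dots> \<le> 2 * card P"
  proof -
    have "card {B \<in> P. e \<subseteq> insert (\<phi> B) B} \<le> 2" if "e \<in> P" for e
      using that cover unfolding P_def mem_two_subsets_iff[of e] by blast
    then show ?thesis
      using sum_bounded_above[of P "\<lambda>e. card {B \<in> P. e \<subseteq> insert (\<phi> B) B}" 2]
      by (simp add: mult.commute)
  qed
  finally have "3 * card M + card N \<le> 2 * card P" .
  moreover have "card P = card M + card N"
    using split by (simp add: card_Un_disjoint)
  ultimately have "card P \<le> 2 * card N"
    by linarith
  then show ?thesis
    unfolding N_def P_def .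
qed

theorem lemma2p1:
  fixes X Y :: "'a set" and \<A> :: "'a set multiset" and \<phi> :: "'a set \<Rightarrow> 'a" and v w :: nat
  assumes "v \<ge> 2"
    and "bibd X v 2 1 \<A>"
    and "set_mset \<A> = {B. B \<subseteq> X \<and> card B = 2}"
    and "X \<subseteq> Y" and "finite Y" and "card Y = w"
    and "weak_nesting X v 2 1 \<A> Y w \<phi>"
  shows "real w \<ge> (5 * real v - 1) / 4"
proof -
  have "finite X"
    using assms(4,5) by (rule finite_subset)
  have card_X: "card X = v"
    using assms(2) unfolding bibd_def by blast
  have blocks: "set_mset \<A> = two_subsets X"
    using assms(3) unfolding two_subsets_def .
  have nested: "\<phi> B \<in> Y" "\<phi> B \<notin> B" if "B \<in> two_subsets X" for B
    using assms(7) that unfolding weak_nesting_def blocks[symmetric] by auto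
  have cover: "card {B \<in> two_subsets X. {x, y} \<subseteq> insert (\<phi> B) B} \<le> 2"
    if "x \<in> Y" "y \<in> Y" "x \<noteq> y" for x y
    using weak_nesting_card_covering_le[OF assms(7) that] by (simp add: blocks)
  have "card (two_subsets X) \<le> 2 * card {B \<in> two_subsets X. \<phi> B \<notin> X}"
    by (rule card_two_subsets_le_twice_outside[OF \<open>finite X\<close>]) (use nested cover assms(4) in blast)+
  also have "card {B \<in> two_subsets X. \<phi> B \<notin> X} \<le> card (Y - X) * card X"
    by (rule card_nested_outside_le[OF assms(5,4)]) (use nested cover assms(4) in blast)+
  finally have pairs_le: "card (two_subsets X) \<le> 2 * ((w - v) * v)"
    using card_Diff_subset[OF \<open>finite X\<close> assms(4)] assms(6) card_X by simp
  have "(v - 1) * v = 2 * card (two_subsets X)"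
    using card_two_subsets[OF \<open>finite X\<close>] card_X by (simp add: mult.commute)
  also have "\<dots> \<le> (4 * (w - v)) * v"
    using pairs_le by (simp add: mult.commute)
  finally have "v - 1 \<le> 4 * (w - v)"
    using assms(1) by simp
  moreover have "v \<le> w"
    using card_mono[OF assms(5,4)] card_X assms(6) by simp
  ultimately show ?thesis
    using assms(1) by (simp add: of_nat_diff)
qed

end
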